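(* Let $r$ be a positive integer and $(S,\mathcal T)$ a feasible instance of test set with redundancy $r$, with $|S|=n$. Let $\mathcal T^*$ be an optimal (minimum-cardinality) $r$-test set, $m^*=|\mathcal T^*|$, let $\#_0=rn(n-1)/2$, and let $\#_B$ be the number of item pairs differentiated by exactly $r$ tests in $\mathcal T^*$; assume $\#_B>0$. Then the size of every solution returned by the set cover greedy algorithm SGA (with any tie-breaking) is at most $$\Big(\ln\#_0-\frac{1}{r+1}\ln\frac{\#_0}{\#_B}+\frac{r}{r+1}\ln(r+1)+1\Big)m^*+1.$$
   Context: Test set with redundancy $r\in\mathbb Z^+$: the input is a finite set of items $S$ with $|S|=n$ and a collection $\mathcal T$ of subsets of $S$ (called tests); it is assumed that there are no two tests $T_1,T_2\in\mathcal T$ with $T_1=S-T_2$. An item pair is a set $\{i,j\}$ of two different items of $S$. A test $T$ differentiates an item pair $a$ if $|T\cap a|=1$; for a family $\mathcal F$ of tests, $\perp(a,\mathcal F)$ denotes the number of tests in $\mathcal F$ that differentiate $a$. A family $\mathcal T'\subseteq\mathcal T$ is an $r$-test set of $S$ if every item pair is differentiated by at least $r$ different tests of $\mathcal T'$; the goal is to find an $r$-test set of minimum cardinality (the instance is feasible if some $r$-test set exists). For a family $\bar{\mathcal T}\subseteq\mathcal T$ define the differentiation measure $\#(\bar{\mathcal T})=\sum_a\max(r-\perp(a,\bar{\mathcal T}),0)$, the sum over all item pairs $a$; note $\#(\varnothing)=rn(n-1)/2$. The set cover greedy algorithm SGA: start with $\bar{\mathcal T}=\varnothing$; while $\#(\bar{\mathcal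 T})>0$, select a test $T\in\mathcal T-\bar{\mathcal T}$ minimizing $\#(\bar{\mathcal T}\cup\{T\})$ and set $\bar{\mathcal T}\leftarrow\bar{\mathcal T}\cup\{T\}$; return $\bar{\mathcal T}$. *)

theory Defs
  imports Complex_Main
begin

definition item_pairs :: "'a set \<Rightarrow> 'a set set" where
  "item_pairs S = {a. \<exists>i j. i \<in> S \<and> j \<in> S \<and> i \<noteq> j \<and> a = {i, j}}"

definition differentiates :: "'a set \<Rightarrow> 'a set \<Rightarrow> bool" where
  "differentiates T a \<longleftrightarrow> card (T \<inter> a) = 1"

definition perp :: "'a set \<Rightarrow> 'a set set \<Rightarrow> nat" where
  "perp a F = card {T \<in> F. differentiates T a}"

definition is_r_test_set :: "nat \<Rightarrow> 'a set \<Rightarrow> 'a set set \<Rightarrow> 'a set set \<Rightarrow> bool" where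
  "is_r_test_set r S Tests F \<longleftrightarrow> F \<subseteq> Tests \<and> (\<forall>a \<in> item_pairs S. perp a F \<ge> r)"

(* differentiation measure #(F) = sum over pairs of max(r - perp, 0) (nat subtraction truncates) *)
definition diff_measure :: "nat \<Rightarrow> 'a set \<Rightarrow> 'a set set \<Rightarrow> nat" where
  "diff_measure r S F = (\<Sum>a \<in> item_pairs S. r - perp a F)"

inductive sga_reach :: "nat \<Rightarrow> 'a set \<Rightarrow> 'a set set \<Rightarrow> 'a set set \<Rightarrow> bool"
  for r S Tests where
  start: "sga_reach r S Tests {}"
| step: "\<lbrakk> sga_reach r S Tests F; diff_measure r S F > 0; T \<in> Tests - F;
           \<forall>T' \<in> Tests - F. diff_measure r S (F \<union> {T}) \<le> diff_measure r S (F \<union> {T'}) \<rbrakk>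
         \<Longrightarrow> sga_reach r S Tests (F \<union> {T})"

definition sga_output :: "nat \<Rightarrow> 'a set \<Rightarrow> 'a set set \<Rightarrow> 'a set set \<Rightarrow> bool" where
  "sga_output r S Tests F \<longleftrightarrow> sga_reach r S Tests F \<and> diff_measure r S F = 0"

end

theory Submission
  imports Defs
begin

(* Let G be any r-test set, m = |G|, and call a pair tight if G differentiates it exactly r times
   (#_B tight pairs). Summing over pairs, the tests of G not yet chosen remove all of the current
   deficit d, and even (r+1)d - r #_B of it counted with weight r, since every non-tight pair is
   covered once more than needed. The greedy test does at least as well as their average, so its
   gain g satisfies d <= m g and (r+1) d <= r m g + r #_B. Consequently the potential, ln d for
   d <= r #_B and ln(r #_B) + r/(r+1) ln(((r+1) d - r #_B) / (r^2 #_B)) beyond, decreases by at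
   least 1/m per step (each branch integrates the corresponding bound on 1/(m g)); evaluating it
   at #_0 gives the bound. *)

lemma finite_item_pairs: "finite S \<Longrightarrow> finite (item_pairs S)"
  by (rule finite_subset[of _ "Pow S"]) (auto simp: item_pairs_def)

lemma card_item_pairs:
  assumes "finite S"
  shows "real (card (item_pairs S)) = real (card S) * (real (card S) - 1) / 2"
proof -
  have "item_pairs S = {A. A \<subseteq> S \<and> card A = 2}"
    unfolding item_pairs_def card_2_iff by auto
  then have "card (item_pairs S) = card S * (card S - 1) div 2"
    using n_subsets[OF assms] by (simp add: choose_two)
  moreover have "even (card S * (card S - 1))"
    by (cases "card S") auto
  ultimately show ?thesis
    by (cases "card S") (simp_all add: real_of_nat_div algebra_simps)
qed

lemma diff_measure_empty: "diff_measure r S {} = r * card (item_pairs S)"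
  by (simp add: diff_measure_def perp_def)

lemma perp_insert:
  assumes "finite F" "T \<notin> F"
  shows "perp a (insert T F) = perp a F + (if differentiates T a then 1 else 0)"
proof -
  have "{T' \<in> insert T F. differentiates T' a} =
        (if differentiates T a then insert T {T' \<in> F. differentiates T' a} else {T' \<in> F. differentiates T' a})"
    by auto
  then show ?thesis using assms by (simp add: perp_def)
qed

lemma perp_le_perp_Diff_add:
  assumes "finite G" "finite F"
  shows "perp a G \<le> perp a (G - F) + perp a F"
proof -
  have "perp a G \<le> card ({T \<in> G - F. differentiates T a} \<union> {T \<in> F. differentiates T a})"
    unfolding perp_def using assms by (intro card_mono) auto
  also have "\<dots> \<le> perp a (G - F) + perp a F"
    unfolding perp_def by (rule card_Un_le)
  finally show ?thesis .
qed

definition gain :: "nat \<Rightarrow> 'a set \<Rightarrow> 'a set set \<Rightarrow> 'a set \<Rightarrow> nat" where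
  "gain r S F T = card {a \<in> item_pairs S. perp a F < r \<and> differentiates T a}"

lemma diff_measure_insert:
  assumes "finite S" "finite F" "T \<notin> F"
  shows "diff_measure r S F = diff_measure r S (insert T F) + gain r S F T"
proof -
  have "diff_measure r S F = (\<Sum>a\<in>item_pairs S. (r - perp a (insert T F))
          + (if perp a F < r \<and> differentiates T a then 1 else 0))"
    unfolding diff_measure_def by (rule sum.cong) (auto simp: perp_insert[OF assms(2,3)])
  also have "\<dots> = diff_measure r S (insert T F) + gain r S F T"
    using finite_item_pairs[OF assms(1)]
    by (simp add: diff_measure_def gain_def sum.distrib sum.If_cases Int_def)
  finally show ?thesis .
qed

lemma sum_gain_eq:
  assumes "finite S" "finite G"
  shows "(\<Sum>T\<in>G. gain r S F T) = (\<Sum>a\<in>item_pairs S. if perp a F < r then perp a G else 0)"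
proof -
  have "(\<Sum>T\<in>G. gain r S F T)
      = (\<Sum>T\<in>G. \<Sum>a\<in>item_pairs S. if perp a F < r \<and> differentiates T a then 1 else 0)"
    using finite_item_pairs[OF assms(1)] by (simp add: gain_def sum.If_cases Int_def)
  also have "\<dots> = (\<Sum>a\<in>item_pairs S. \<Sum>T\<in>G. if perp a F < r \<and> differentiates T a then 1 else 0)"
    by (rule sum.swap)
  also have "\<dots> = (\<Sum>a\<in>item_pairs S. if perp a F < r then perp a G else 0)"
    using assms(2) by (intro sum.cong) (auto simp: perp_def sum.If_cases Int_def)
  finally show ?thesis .
qed

lemma deficit_bounds:
  fixes r p q h :: nat
  assumes "r \<le> p" "p \<le> h + q"
  shows "r - q \<le> h" and "(r + 1) * (r - q) \<le> r * h + r * (if p = r then 1 else 0)"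
proof -
  show "r - q \<le> h" using assms by linarith
  show "(r + 1) * (r - q) \<le> r * h + r * (if p = r then 1 else 0)"
  proof (cases "p = r")
    case True
    then have "r * (r - q) \<le> r * h"
      using assms by (intro mult_le_mono2) linarith
    moreover have "(r + 1) * (r - q) = r * (r - q) + (r - q)" "r - q \<le> r" by simp_all
    ultimately have "(r + 1) * (r - q) \<le> r * h + r" by linarith
    then show ?thesis using True by simp
  next
    case False
    show ?thesis
    proof (cases "q < r")
      case True
      then have "r - q + 1 \<le> h" using assms \<open>p \<noteq> r\<close> by linarith
      then have "(r + 1) * (r - q) \<le> r * h"
        using mult_le_mono2[of "r - q + 1" h r] diff_le_self[of r q] by (simp add: algebra_simps)
      then show ?thesis by simp
    qed simp
  qed
qed

definition tight_pairs :: "nat \<Rightarrow> 'a set \<Rightarrow> 'a set set \<Rightarrow> 'a set set" where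
  "tight_pairs r S G = {a \<in> item_pairs S. perp a G = r}"

lemma diff_measure_le_sum_gain:
  assumes "finite S" "finite F" "finite G" and cover: "\<forall>a\<in>item_pairs S. r \<le> perp a G"
  shows "diff_measure r S F \<le> (\<Sum>T\<in>G - F. gain r S F T)"
    and "(r + 1) * diff_measure r S F
           \<le> r * (\<Sum>T\<in>G - F. gain r S F T) + r * card (tight_pairs r S G)"
proof -
  define h where "h a = (if perp a F < r then perp a (G - F) else 0)" for a
  have sum_gain: "(\<Sum>T\<in>G - F. gain r S F T) = (\<Sum>a\<in>item_pairs S. h a)"
    unfolding h_def using assms(1,3) by (intro sum_gain_eq) auto
  have bounds: "r - perp a F \<le> h a \<and>
      (r + 1) * (r - perp a F) \<le> r * h a + r * (if perp a G = r then 1 else 0)"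
    if "a \<in> item_pairs S" for a
    using deficit_bounds[of r "perp a G" "perp a (G - F)" "perp a F"]
      perp_le_perp_Diff_add[OF assms(3,2)] cover that
    by (cases "perp a F < r") (simp_all add: h_def)
  show "diff_measure r S F \<le> (\<Sum>T\<in>G - F. gain r S F T)"
    unfolding sum_gain diff_measure_def by (rule sum_mono) (use bounds in blast)
  have "(r + 1) * diff_measure r S F = (\<Sum>a\<in>item_pairs S. (r + 1) * (r - perp a F))"
    by (simp add: diff_measure_def sum_distrib_left)
  also have "\<dots> \<le> (\<Sum>a\<in>item_pairs S. r * h a + r * (if perp a G = r then 1 else 0))"
    by (rule sum_mono) (use bounds in blast)
  also have "\<dots> = r * (\<Sum>T\<in>G - F. gain r S F T) + r * card (tight_pairs r S G)"
    using finite_item_pairs[OF assms(1)]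
    by (simp add: sum_gain sum.distrib flip: sum_distrib_left) (simp add: tight_pairs_def sum.If_cases Int_def)
  finally show "(r + 1) * diff_measure r S F
      \<le> r * (\<Sum>T\<in>G - F. gain r S F T) + r * card (tight_pairs r S G)" .
qed

lemma sum_gain_le_greedy:
  assumes "finite S" "finite F" "T \<in> Tests - F"
    and greedy: "\<forall>T' \<in> Tests - F. diff_measure r S (F \<union> {T}) \<le> diff_measure r S (F \<union> {T'})"
    and "G \<subseteq> Tests" "finite G"
  shows "(\<Sum>T'\<in>G - F. gain r S F T') \<le> card G * gain r S F T"
proof -
  have "gain r S F T' \<le> gain r S F T" if "T' \<in> G - F" for T'
  proof -
    have "diff_measure r S (insert T F) \<le> diff_measure r S (insert T' F)"
      using greedy that assms(5) by auto
    then show ?thesis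
      using that assms(3) diff_measure_insert[OF assms(1,2), of T r]
        diff_measure_insert[OF assms(1,2), of T' r] by auto
  qed
  then have "(\<Sum>T'\<in>G - F. gain r S F T') \<le> card (G - F) * gain r S F T"
    using sum_bounded_above[of "G - F" "gain r S F" "gain r S F T"] by simp
  also have "\<dots> \<le> card G * gain r S F T"
    using assms(6) by (intro mult_right_mono card_mono) auto
  finally show ?thesis .
qed

lemma sga_reach_subset: "sga_reach r S Tests F \<Longrightarrow> F \<subseteq> Tests"
  by (induction rule: sga_reach.induct) auto

lemma greedy_gain_bounds:
  assumes "finite S" "finite Tests" "F \<subseteq> Tests" "T \<in> Tests - F"
    and "\<forall>T' \<in> Tests - F. diff_measure r S (F \<union> {T}) \<le> diff_measure r S (F \<union> {T'})"
    and "is_r_test_set r S Tests G"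
  shows "diff_measure r S F \<le> card G * gain r S F T"
    and "(r + 1) * diff_measure r S F
           \<le> r * (card G * gain r S F T) + r * card (tight_pairs r S G)"
proof -
  have "G \<subseteq> Tests" and cover: "\<forall>a\<in>item_pairs S. r \<le> perp a G"
    using assms(6) by (auto simp: is_r_test_set_def)
  moreover have "finite F" "finite G"
    using assms(2,3) \<open>G \<subseteq> Tests\<close> by (auto intro: finite_subset)
  ultimately have "(\<Sum>T'\<in>G - F. gain r S F T') \<le> card G * gain r S F T"
    using sum_gain_le_greedy assms(1,4,5) by blast
  then show "diff_measure r S F \<le> card G * gain r S F T"
    "(r + 1) * diff_measure r S F
       \<le> r * (card G * gain r S F T) + r * card (tight_pairs r S G)"
    using diff_measure_le_sum_gain[OF assms(1) \<open>finite F\<close> \<open>finite G\<close> cover]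
      mult_le_mono2[of _ _ r] by (meson le_trans add_le_mono1)+
qed

lemma ln_diff_ge:
  fixes x y :: real
  assumes "0 < x" "0 < y"
  shows "(x - y) / x \<le> ln x - ln y"
  using ln_diff_le[OF assms(2,1)] by (simp add: diff_divide_distrib)

definition greedy_potential :: "real \<Rightarrow> real \<Rightarrow> real \<Rightarrow> real" where
  "greedy_potential r B x =
     (if x \<le> r * B then ln x
      else ln (r * B) + r / (r + 1) * (ln ((r + 1) * x - r * B) - ln (r * r * B)))"

lemma greedy_potential_above:
  assumes "0 < r" "0 < B" "r * B \<le> x"
  shows "greedy_potential r B x = ln (r * B) + r / (r + 1) * (ln ((r + 1) * x - r * B) - ln (r * r * B))"
proof (cases "x = r * B")
  case True
  then have "(r + 1) * x - r * B = r * r * B" by (simp add: algebra_simps)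
  then show ?thesis using True by (simp add: greedy_potential_def)
qed (use assms in \<open>simp add: greedy_potential_def\<close>)

lemma greedy_potential_nonneg:
  assumes "1 \<le> r" "1 \<le> B" "1 \<le> x"
  shows "0 \<le> greedy_potential r B x"
proof (cases "x \<le> r * B")
  case False
  have "r * r * B \<le> (r + 1) * x - r * B"
    using False assms(1) mult_left_mono[of "r * B" x "r + 1"] by (simp add: algebra_simps)
  then have "ln (r * r * B) \<le> ln ((r + 1) * x - r * B)"
    using assms(1,2) by (intro ln_mono) auto
  moreover have "0 \<le> ln (r * B)"
    using assms(1,2) mult_mono[of 1 r 1 B] by simp
  ultimately show ?thesis
    using False assms by (simp add: greedy_potential_def)
qed (use assms in \<open>simp add: greedy_potential_def\<close>)

lemma greedy_potential_diff_below:
  assumes "0 < y" "y \<le> x" "x \<le> r * B"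
  shows "(x - y) / x \<le> greedy_potential r B x - greedy_potential r B y"
  using assms ln_diff_ge[of x y] by (simp add: greedy_potential_def)

lemma greedy_potential_diff_above:
  assumes "0 < r" "0 < B" "r * B \<le> y" "y \<le> x"
  shows "r * (x - y) / ((r + 1) * x - r * B) \<le> greedy_potential r B x - greedy_potential r B y"
proof -
  define X Y where "X = (r + 1) * x - r * B" and "Y = (r + 1) * y - r * B"
  have "r * r * B \<le> Y"
    using assms(3) mult_left_mono[of "r * B" y "r + 1"] assms(1) by (simp add: Y_def algebra_simps)
  moreover have "0 < r * r * B" using assms(1,2) by simp
  moreover have "X - Y = (r + 1) * (x - y)" by (simp add: X_def Y_def algebra_simps)
  moreover have "0 \<le> (r + 1) * (x - y)" using assms(1,4) by simp
  ultimately have "0 < Y" "Y \<le> X" "X - Y = (r + 1) * (x - y)" by auto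
  then have "r * (x - y) / X = r / (r + 1) * ((X - Y) / X)"
    using assms(1) by simp
  also have "\<dots> \<le> r / (r + 1) * (ln X - ln Y)"
    using ln_diff_ge[of X Y] \<open>0 < Y\<close> \<open>Y \<le> X\<close> assms(1) by (intro mult_left_mono) auto
  also have "\<dots> = greedy_potential r B x - greedy_potential r B y"
    using assms order.trans[OF assms(3,4)]
    by (simp add: greedy_potential_above X_def Y_def algebra_simps)
  finally show ?thesis by (simp add: X_def)
qed

lemma greedy_potential_diff_ge:
  assumes "0 < r" "0 < B" "0 < y" "y \<le> x" "x \<le> c" "(r + 1) * x - r * B \<le> r * c"
  shows "(x - y) / c \<le> greedy_potential r B x - greedy_potential r B y"
proof -
  have below: "(x' - y') / c \<le> greedy_potential r B x' - greedy_potential r B y'"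
    if "0 < y'" "y' \<le> x'" "x' \<le> r * B" "x' \<le> c" for x' y'
  proof -
    have "(x' - y') / c \<le> (x' - y') / x'"
      using that by (intro divide_left_mono) auto
    with greedy_potential_diff_below[OF that(1-3)] show ?thesis by linarith
  qed
  have above: "(x' - y') / c \<le> greedy_potential r B x' - greedy_potential r B y'"
    if "r * B \<le> y'" "y' \<le> x'" "(r + 1) * x' - r * B \<le> r * c" for x' y'
  proof -
    have "0 < r * r * B" using assms(1,2) by simp
    also have "r * r * B \<le> (r + 1) * x' - r * B"
      using that(1,2) assms(1) mult_left_mono[of "r * B" x' "r + 1"] by (simp add: algebra_simps)
    finally have "0 < (r + 1) * x' - r * B" .
    have "(x' - y') / c = r * (x' - y') / (r * c)"
      using assms(1) by simp
    also have "\<dots> \<le> r * (x' - y') / ((r + 1) * x' - r * B)"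
      using that \<open>0 < (r + 1) * x' - r * B\<close> assms(1) by (intro divide_left_mono) auto
    finally show ?thesis
      using greedy_potential_diff_above[OF assms(1,2) that(1,2)] by linarith
  qed
  consider "x \<le> r * B" | "r * B \<le> y" | "y < r * B" "r * B < x" by linarith
  then show ?thesis
  proof cases
    case 3
    have "(x - y) / c = (x - r * B) / c + (r * B - y) / c"
      by (simp add: diff_divide_distrib)
    also have "\<dots> \<le> (greedy_potential r B x - greedy_potential r B (r * B))
        + (greedy_potential r B (r * B) - greedy_potential r B y)"
      using above[of "r * B" x] below[of y "r * B"] 3 assms by (intro add_mono) auto
    finally show ?thesis by simp
  qed (use assms below above in auto)
qed

lemma greedy_potential_decrease:
  assumes "0 < r" "0 < B" "0 < d'" "d' \<le> d"
    and "d \<le> m * (d - d')" "(r + 1) * d \<le> r * (m * (d - d')) + r * B"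
  shows "1 \<le> m * (greedy_potential r B d - greedy_potential r B d')"
proof -
  have "0 < m * (d - d')" using assms(3-5) by linarith
  then have "0 < m" "d' < d" using assms(4) by (auto simp: zero_less_mult_iff)
  have "1 / m = (d - d') / (m * (d - d'))" using \<open>d' < d\<close> by simp
  also have "\<dots> \<le> greedy_potential r B d - greedy_potential r B d'"
    using assms by (intro greedy_potential_diff_ge) auto
  finally show ?thesis using \<open>0 < m\<close> by (simp add: field_simps)
qed

lemma greedy_potential_le:
  assumes "1 \<le> r" "1 \<le> B" "r * B \<le> x"
  shows "greedy_potential r B x \<le> ln x - 1 / (r + 1) * ln (x / B) + r / (r + 1) * ln (r + 1) + 1"
proof -
  have "1 \<le> r * B" using assms(1,2) mult_mono[of 1 r 1 B] by simp
  then have "0 < B" "0 < r * B" "0 < x" using assms by auto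
  have "0 < r * x" using assms(1) \<open>0 < x\<close> by simp
  then have "0 < (r + 1) * x - r * B"
    using assms(3) by (simp add: distrib_right)
  then have "ln ((r + 1) * x - r * B) \<le> ln ((r + 1) * x)"
    using \<open>0 < r * B\<close> by (intro ln_mono) auto
  have "greedy_potential r B x = ln (r * B) + r / (r + 1) * (ln ((r + 1) * x - r * B) - ln (r * r * B))"
    using assms \<open>0 < B\<close> by (simp add: greedy_potential_above)
  also have "\<dots> \<le> ln (r * B) + r / (r + 1) * (ln ((r + 1) * x) - ln (r * r * B))"
    using \<open>ln _ \<le> ln _\<close> assms(1) by (intro add_left_mono mult_left_mono) auto
  also have "\<dots> \<le> ln x - 1 / (r + 1) * ln (x / B) + r / (r + 1) * ln (r + 1) + 1"
  proof -
    define a where "a = 1 / (r + 1)"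
    have "r / (r + 1) = 1 - a" "a \<le> 1 / 2" using assms(1) by (simp_all add: a_def field_simps)
    moreover have "0 \<le> ln r" using assms(1) by simp
    ultimately have "0 \<le> (1 - 2 * a) * ln r" by simp
    moreover have logs: "ln (r * B) = ln r + ln B" "ln ((r + 1) * x) = ln (r + 1) + ln x"
      "ln (r * r * B) = 2 * ln r + ln B" "ln (x / B) = ln x - ln B"
      using assms(1) \<open>0 < B\<close> \<open>0 < x\<close> by (simp_all add: ln_mult ln_div)
    ultimately show ?thesis
      unfolding logs \<open>r / (r + 1) = 1 - a\<close> a_def[symmetric] by (simp add: algebra_simps)
  qed
  finally show ?thesis .
qed

lemma sga_reach_card_le_potential:
  assumes "sga_reach r S Tests F" "0 < diff_measure r S F"
    and "0 < r" "finite S" "\<forall>T \<in> Tests. T \<subseteq> S"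
    and "is_r_test_set r S Tests G" "0 < card (tight_pairs r S G)"
  shows "real (card F) \<le> real (card G) *
    (greedy_potential r (card (tight_pairs r S G)) (diff_measure r S {})
     - greedy_potential r (card (tight_pairs r S G)) (diff_measure r S F))"
  using assms(1,2)
proof (induction rule: sga_reach.induct)
  case (step F T)
  let ?P = "greedy_potential r (card (tight_pairs r S G))"
  have "finite Tests"
    using assms(4,5) by (auto intro: finite_subset[of _ "Pow S"])
  moreover have "F \<subseteq> Tests" using step.hyps(1) by (rule sga_reach_subset)
  ultimately have "finite F" by (simp add: finite_subset)
  have split: "diff_measure r S F = diff_measure r S (insert T F) + gain r S F T"
    using diff_measure_insert[OF assms(4) \<open>finite F\<close>] step.hyps(3) by simp
  have "1 \<le> real (card G) * (?P (diff_measure r S F) - ?P (diff_measure r S (insert T F)))"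
  proof (rule greedy_potential_decrease)
    note bounds = greedy_gain_bounds[OF assms(4) \<open>finite Tests\<close> \<open>F \<subseteq> Tests\<close> step.hyps(3,4) assms(6)]
    have "real (diff_measure r S F) \<le> real (card G * gain r S F T)"
      "real ((r + 1) * diff_measure r S F)
         \<le> real (r * (card G * gain r S F T) + r * card (tight_pairs r S G))"
      using bounds by (simp_all only: of_nat_le_iff)
    moreover have "real (diff_measure r S F) - real (diff_measure r S (insert T F)) = real (gain r S F T)"
      using split by simp
    ultimately show "real (diff_measure r S F) \<le> real (card G) *
        (real (diff_measure r S F) - real (diff_measure r S (insert T F)))"
      and "(real r + 1) * real (diff_measure r S F) \<le> real r * (real (card G) *
        (real (diff_measure r S F) - real (diff_measure r S (insert T F)))) + real r * real (card (tight_pairs r S G))"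
      by (simp_all add: distrib_right)
  qed (use assms(3,7) step.prems split in auto)
  moreover have "card (F \<union> {T}) = card F + 1"
    using \<open>finite F\<close> step.hyps(3) by simp
  ultimately show ?case
    using step.IH step.hyps(2) by (simp add: algebra_simps)
qed simp

lemma sga_output_card_le_potential:
  assumes "sga_output r S Tests F"
    and "0 < r" "finite S" "\<forall>T \<in> Tests. T \<subseteq> S"
    and "is_r_test_set r S Tests G" "0 < card (tight_pairs r S G)"
  shows "real (card F) \<le> real (card G) *
    greedy_potential r (card (tight_pairs r S G)) (diff_measure r S {}) + 1"
proof -
  have reach: "sga_reach r S Tests F" and finished: "diff_measure r S F = 0"
    using assms(1) by (auto simp: sga_output_def)
  from reach show ?thesis
  proof cases
    case start
    then have "item_pairs S = {}"
      using finished assms(2,3) by (simp add: diff_measure_empty finite_item_pairs)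
    then show ?thesis using assms(6) by (simp add: tight_pairs_def)
  next
    case (step F' T)
    have "finite F'"
      using sga_reach_subset[OF step(2)] assms(3,4) by (auto intro: finite_subset[of _ "Pow S"])
    then have "card F = card F' + 1" using step(1,4) by simp
    moreover have "0 \<le> real (card G) * greedy_potential r (card (tight_pairs r S G)) (diff_measure r S F')"
      using step(3) assms(2,6) by (intro mult_nonneg_nonneg greedy_potential_nonneg) auto
    ultimately show ?thesis
      using sga_reach_card_le_potential[OF step(2,3) assms(2-6)]
      by (simp add: right_diff_distrib)
  qed
qed

theorem lemma2:
  fixes r :: nat and S :: "'a set" and Tests :: "'a set set" and Topt :: "'a set set"
  assumes "r > 0"
    and "finite S"
    and "\<forall>T \<in> Tests. T \<subseteq> S"
    and "\<forall>T1 \<in> Tests. \<forall>T2 \<in> Tests. T1 \<noteq> S - T2"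
    and "is_r_test_set r S Tests Topt"
    and "\<forall>F. is_r_test_set r S Tests F \<longrightarrow> card Topt \<le> card F"
    and "card {a \<in> item_pairs S. perp a Topt = r} > 0"
    and "sga_output r S Tests F"
  shows "let n = card S; m = real (card Topt);
             h0 = real r * real n * (real n - 1) / 2;
             hB = real (card {a \<in> item_pairs S. perp a Topt = r})
         in real (card F) \<le>
            (ln h0 - 1 / (real r + 1) * ln (h0 / hB) + real r / (real r + 1) * ln (real r + 1) + 1) * m + 1"
proof -
  define B where "B = card (tight_pairs r S Topt)"
  have B_pos: "0 < B" using assms(7) by (simp add: B_def tight_pairs_def)
  have "B \<le> card (item_pairs S)"
    unfolding B_def tight_pairs_def using finite_item_pairs[OF assms(2)] by (intro card_mono) auto
  then have "real r * real B \<le> real (diff_measure r S {})"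
    by (simp add: diff_measure_empty mult_left_mono)
  then have "greedy_potential r B (diff_measure r S {}) \<le> ln (diff_measure r S {})
      - 1 / (real r + 1) * ln (diff_measure r S {} / B) + r / (real r + 1) * ln (real r + 1) + 1"
    using assms(1) B_pos by (intro greedy_potential_le) auto
  then have "real (card F) \<le> real (card Topt) * (ln (diff_measure r S {})
      - 1 / (real r + 1) * ln (diff_measure r S {} / B) + r / (real r + 1) * ln (real r + 1) + 1) + 1"
    using sga_output_card_le_potential[OF assms(8,1-3,5)] B_pos mult_left_mono[of _ _ "real (card Topt)"]
    unfolding B_def by fastforce
  moreover have "real (diff_measure r S {}) = real r * real (card S) * (real (card S) - 1) / 2"
    by (simp add: diff_measure_empty card_item_pairs[OF assms(2)])
  ultimately show ?thesis
    by (simp add: B_def tight_pairs_def mult.commute)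
qed

end
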